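(* Let $A,A^*\in\mathrm{Mat}_{d+1}(\mathbb K)$ be as in the setup below. Then $A,A^*$ is a Leonard pair if and only if there exists an invertible $H\in\mathrm{Mat}_{d+1}(\mathbb K)$ such that $H^{-1}A^tH=A$ and $H^{-1}A^{*t}H=A^*$, where ${}^t$ denotes transpose.
   Context: Let $\mathbb K$ be a field and $d\ge0$ an integer; rows/columns are indexed $0,\ldots,d$. Let $\theta_0,\ldots,\theta_d\in\mathbb K$ be mutually distinct, $\theta^*_0,\ldots,\theta^*_d\in\mathbb K$ mutually distinct, and $\varphi_1,\ldots,\varphi_d\in\mathbb K$ nonzero. Let $A\in\mathrm{Mat}_{d+1}(\mathbb K)$ be lower bidiagonal with $A_{ii}=\theta_i$, $A_{i+1,i}=1$ and all other entries $0$; let $A^*$ be upper bidiagonal with $A^*_{ii}=\theta^*_i$, $A^*_{i-1,i}=\varphi_i$ and all other entries $0$ ($A^*$ is just a name, not an adjoint). A square matrix is tridiagonal if every nonzero entry lies on the diagonal, subdiagonal or superdiagonal, and irreducible tridiagonal if moreover all sub- and superdiagonal entries are nonzero. $A,A^*$ is a Leonard pair if there is a basis of $\mathbb K^{d+1}$ in which $A$ is represented by an irreducible tridiagonal matrix and $A^*$ by a diagonal one, and a basis in which $A^*$ is irreducible tridiagonal and $A$ diagonal. *)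

theory Defs
  imports "Jordan_Normal_Form.Matrix"
begin

definition A_mat :: "nat \<Rightarrow> (nat \<Rightarrow> 'a::field) \<Rightarrow> 'a mat" where
  "A_mat d th = mat (d+1) (d+1) (\<lambda>(i,j). if i = j then th i else if i = j + 1 then 1 else 0)"

definition Astar_mat :: "nat \<Rightarrow> (nat \<Rightarrow> 'a::field) \<Rightarrow> (nat \<Rightarrow> 'a) \<Rightarrow> 'a mat" where
  "Astar_mat d ths ph = mat (d+1) (d+1) (\<lambda>(i,j). if i = j then ths i else if j = i + 1 then ph j else 0)"

definition tridiagonal_mat :: "'a::zero mat \<Rightarrow> bool" where
  "tridiagonal_mat M \<longleftrightarrow> (\<forall>i < dim_row M. \<forall>j < dim_col M.
      M $$ (i,j) \<noteq> 0 \<longrightarrow> (i = j \<or> i = j + 1 \<or> j = i + 1))"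

definition irred_tridiagonal_mat :: "'a::zero mat \<Rightarrow> bool" where
  "irred_tridiagonal_mat M \<longleftrightarrow> tridiagonal_mat M \<and>
     (\<forall>i. i + 1 < dim_row M \<longrightarrow> i + 1 < dim_col M \<longrightarrow>
        M $$ (i+1,i) \<noteq> 0 \<and> M $$ (i,i+1) \<noteq> 0)"

text \<open>A basis of K^n is the columns of an invertible n x n matrix P with inverse Q;
  the matrix representing X in that basis is Q * X * P.\<close>
definition Leonard_pair :: "nat \<Rightarrow> 'a::field mat \<Rightarrow> 'a mat \<Rightarrow> bool" where
  "Leonard_pair n X Y \<longleftrightarrow>
    (\<exists>P \<in> carrier_mat n n. \<exists>Q \<in> carrier_mat n n. P * Q = 1\<^sub>m n \<and> Q * P = 1\<^sub>m n \<and>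
        irred_tridiagonal_mat (Q * X * P) \<and> diagonal_mat (Q * Y * P)) \<and>
    (\<exists>P \<in> carrier_mat n n. \<exists>Q \<in> carrier_mat n n. P * Q = 1\<^sub>m n \<and> Q * P = 1\<^sub>m n \<and>
        irred_tridiagonal_mat (Q * Y * P) \<and> diagonal_mat (Q * X * P))"

end

theory Submission
  imports Defs "Jordan_Normal_Form.Determinant"
begin

(* If A, A* is a Leonard pair, take a basis in which A is an irreducible tridiagonal T and A* a
   diagonal D. There is an invertible diagonal S with T^t S = S T (its entries are products of
   ratios of opposite off-diagonal entries of T), and S trivially commutes with D; transporting
   S back to the standard basis gives H.

   A* is upper bidiagonal with distinct diagonal entries, so its
   eigenvectors form an upper unitriangular matrix P. Then T = P^-1 A P is upper Hessenberg with
   nonzero subdiagonal, while G = P^t H P commutes with the diagonal matrix P^-1 A* P, hence is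
   diagonal and invertible. From G T = T^t G the zero pattern of T is symmetric, so T is
   irreducible tridiagonal. Since A is the transpose of a matrix of the same shape as A*, the
   same argument applied to the transposes, with H^-1 in place of H, gives the other basis. *)

lemma index_mult_mat_sum:
  assumes "A \<in> carrier_mat n k" "B \<in> carrier_mat k m" "i < n" "j < m"
  shows "(A * B) $$ (i,j) = (\<Sum>l<k. A $$ (i,l) * B $$ (l,j))"
  using assms by (simp add: scalar_prod_def atLeast0LessThan)

lemma sum_eq_single_term:
  fixes n :: nat
  assumes "a < n" "\<And>l. l < n \<Longrightarrow> l \<noteq> a \<Longrightarrow> f l = (0::'a::comm_monoid_add)"
  shows "(\<Sum>l<n. f l) = f a"
  using assms by (subst sum.mono_neutral_right[of "{..<n}" "{a}"]) auto

lemma mult_inverse_cancel_left: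
  fixes A B Z :: "'a::semiring_1 mat"
  assumes "A \<in> carrier_mat n n" "B \<in> carrier_mat n n" "A * B = 1\<^sub>m n" "dim_row Z = n"
  shows "A * (B * Z) = Z"
proof -
  have "Z \<in> carrier_mat n (dim_col Z)" using assms(4) by auto
  then show ?thesis using assms(1-3) by (simp flip: assoc_mult_mat)
qed

lemma transpose_mult_eq_one:
  fixes P Q :: "'a::comm_semiring_1 mat"
  assumes "P \<in> carrier_mat n n" "Q \<in> carrier_mat n n" "P * Q = 1\<^sub>m n"
  shows "transpose_mat Q * transpose_mat P = 1\<^sub>m n"
  using arg_cong[OF assms(3), of transpose_mat] by (simp add: transpose_mult[OF assms(1,2)])

lemma mat_diag_transpose [simp]: "transpose_mat (mat_diag n f) = mat_diag n f"
  by (auto intro!: eq_matI simp: mat_diag_def)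

lemma diagonal_mat_diag [simp]: "diagonal_mat (mat_diag n f)"
  by (simp add: mat_diag_def diagonal_mat_def)

lemma diagonal_mat_transpose:
  assumes "diagonal_mat M"
  shows "diagonal_mat (transpose_mat M)"
  using assms unfolding diagonal_mat_def by auto

lemma diagonal_mat_eq_mat_diag:
  assumes "G \<in> carrier_mat n n" "diagonal_mat G"
  shows "G = mat_diag n (\<lambda>i. G $$ (i,i))"
  using assms by (auto intro!: eq_matI simp: mat_diag_def diagonal_mat_def)

lemma diagonal_if_commutes_with_mat_diag:
  fixes G :: "'a::field mat"
  assumes G: "G \<in> carrier_mat n n" and inj: "inj_on f {..<n}"
    and comm: "G * mat_diag n f = mat_diag n f * G"
  shows "diagonal_mat G"
  unfolding diagonal_mat_def
proof (intro allI impI)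
  fix i j assume "i < dim_row G" "j < dim_col G" "i \<noteq> j"
  then have ij: "i < n" "j < n" "i \<noteq> j" using G by auto
  have "G $$ (i,j) * f j = f i * G $$ (i,j)"
    using arg_cong[OF comm, of "\<lambda>M. M $$ (i,j)"] G ij
    by (simp add: mat_diag_mult_left mat_diag_mult_right)
  moreover have "f i \<noteq> f j" using inj ij by (auto dest: inj_onD)
  ultimately show "G $$ (i,j) = 0" by (metis mult.commute mult_cancel_right)
qed

lemma mat_diag_right_invertible_nonzero:
  fixes g :: "nat \<Rightarrow> 'a::field"
  assumes "mat_diag n g * K = 1\<^sub>m n" "K \<in> carrier_mat n n" "i < n"
  shows "g i \<noteq> 0"
  using arg_cong[OF assms(1), of "\<lambda>M. M $$ (i,i)"] assms(2,3) by (auto simp: mat_diag_mult_left)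

lemma diag_mult_upper_triangular:
  fixes Q P :: "'a::semiring_0 mat"
  assumes Q: "Q \<in> carrier_mat n n" and P: "P \<in> carrier_mat n n"
    and "upper_triangular Q" "upper_triangular P" and i: "i < n"
  shows "(Q * P) $$ (i,i) = Q $$ (i,i) * P $$ (i,i)"
  unfolding index_mult_mat_sum[OF Q P i i]
  by (rule sum_eq_single_term) (use assms in \<open>auto simp: nat_neq_iff upper_triangular_def\<close>)

lemma upper_triangular_left_inverse:
  fixes P Q :: "'a::field mat"
  assumes P: "P \<in> carrier_mat n n" and Q: "Q \<in> carrier_mat n n"
    and tri: "upper_triangular P" and QP: "Q * P = 1\<^sub>m n"
  shows "upper_triangular Q"
proof -
  have "det Q * det P = 1"
    using arg_cong[OF QP, of det] by (simp add: det_mult[OF Q P])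
  then have "0 \<notin> set (diag_mat P)"
    using upper_triangular_imp_det_eq_0_iff[OF P tri] by auto
  then have diag: "P $$ (j,j) \<noteq> 0" if "j < n" for j
    using P that by (auto simp: diag_mat_def)
  have "Q $$ (i,j) = 0" if "j < i" "i < n" for i j
    using that
  proof (induction j arbitrary: i rule: less_induct)
    case (less j)
    have j: "j < n" using less.prems by simp
    have "0 = (Q * P) $$ (i,j)" using QP less.prems by simp
    also have "\<dots> = Q $$ (i,j) * P $$ (j,j)"
      unfolding index_mult_mat_sum[OF Q P less.prems(2) j] using less.prems
      by (intro sum_eq_single_term) (use less.IH tri P in \<open>auto simp: nat_neq_iff upper_triangular_def\<close>)
    finally show ?case using diag[of j] less.prems by simp
  qed
  then show ?thesis using Q by auto
qed

lemma upper_unitriangular_inverse: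
  fixes P :: "'a::field mat"
  assumes P: "P \<in> carrier_mat n n" and tri: "upper_triangular P"
    and unit: "\<And>i. i < n \<Longrightarrow> P $$ (i,i) = 1"
  obtains Q where "Q \<in> carrier_mat n n" "P * Q = 1\<^sub>m n" "Q * P = 1\<^sub>m n"
    "upper_triangular Q" "\<And>i. i < n \<Longrightarrow> Q $$ (i,i) = 1"
proof -
  have "diag_mat P = replicate n 1"
    using P unit by (intro nth_equalityI) (auto simp: diag_mat_def)
  then have "det P = 1" by (simp add: det_upper_triangular[OF tri P])
  then have "P \<in> Units (ring_mat TYPE('a) n undefined)"
    using det_non_zero_imp_unit[OF P] by simp
  then obtain Q where Q: "Q \<in> carrier_mat n n" "P * Q = 1\<^sub>m n" "Q * P = 1\<^sub>m n"
    unfolding Units_def ring_mat_def by auto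
  have triQ: "upper_triangular Q" by (rule upper_triangular_left_inverse[OF P Q(1) tri Q(3)])
  have "Q $$ (i,i) = 1" if "i < n" for i
    using diag_mult_upper_triangular[OF Q(1) P triQ tri that] Q(3) unit[OF that] that by simp
  with Q triQ show ?thesis by (intro that) auto
qed

definition upper_hessenberg :: "'a::zero mat \<Rightarrow> bool" where
  "upper_hessenberg M \<longleftrightarrow> (\<forall>i < dim_row M. \<forall>j < dim_col M. j + 1 < i \<longrightarrow> M $$ (i,j) = 0)"

lemma upper_hessenberg_mult_upper_triangular_left:
  fixes Q M :: "'a::semiring_0 mat"
  assumes Q: "Q \<in> carrier_mat n n" and M: "M \<in> carrier_mat n n"
    and tri: "upper_triangular Q" and hess: "upper_hessenberg M"
  shows "upper_hessenberg (Q * M)"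
    and "j + 1 < n \<Longrightarrow> (Q * M) $$ (j+1, j) = Q $$ (j+1, j+1) * M $$ (j+1, j)"
proof -
  have Q0: "Q $$ (i,l) = 0" if "l < i" "i < n" for i l
    using that tri Q by auto
  have M0: "M $$ (l,j) = 0" if "j + 1 < l" "l < n" "j < n" for l j
    using that hess M unfolding upper_hessenberg_def by auto
  show "upper_hessenberg (Q * M)"
    unfolding upper_hessenberg_def
  proof (intro allI impI)
    fix i j assume ij: "i < dim_row (Q * M)" "j < dim_col (Q * M)" "j + 1 < i"
    then have i: "i < n" and j: "j < n" using Q M by auto
    have "Q $$ (i,l) * M $$ (l,j) = 0" if "l < n" for l
      using Q0[of l i] M0[of j l] that ij(3) i j by (cases "l < i") auto
    then show "(Q * M) $$ (i,j) = 0"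
      unfolding index_mult_mat_sum[OF Q M i j] by (auto intro!: sum.neutral)
  qed
  show "(Q * M) $$ (j+1, j) = Q $$ (j+1, j+1) * M $$ (j+1, j)" if "j + 1 < n"
  proof -
    have "j < n" using that by simp
    then show ?thesis
      unfolding index_mult_mat_sum[OF Q M that \<open>j < n\<close>] using that Q0 M0
      by (intro sum_eq_single_term) (auto simp: nat_neq_iff)
  qed
qed

lemma upper_hessenberg_mult_upper_triangular_right:
  fixes M P :: "'a::semiring_0 mat"
  assumes M: "M \<in> carrier_mat n n" and P: "P \<in> carrier_mat n n"
    and tri: "upper_triangular P" and hess: "upper_hessenberg M"
  shows "upper_hessenberg (M * P)"
    and "j + 1 < n \<Longrightarrow> (M * P) $$ (j+1, j) = M $$ (j+1, j) * P $$ (j, j)"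
proof -
  have M0: "M $$ (i,l) = 0" if "l + 1 < i" "i < n" for i l
    using that hess M unfolding upper_hessenberg_def by auto
  have P0: "P $$ (l,j) = 0" if "j < l" "l < n" for l j
    using that tri P by auto
  show "upper_hessenberg (M * P)"
    unfolding upper_hessenberg_def
  proof (intro allI impI)
    fix i j assume ij: "i < dim_row (M * P)" "j < dim_col (M * P)" "j + 1 < i"
    then have i: "i < n" and j: "j < n" using M P by auto
    have "M $$ (i,l) * P $$ (l,j) = 0" if "l < n" for l
      using M0[of l i] P0[of j l] that ij(3) i by (cases "j < l") auto
    then show "(M * P) $$ (i,j) = 0"
      unfolding index_mult_mat_sum[OF M P i j] by (auto intro!: sum.neutral)
  qed
  show "(M * P) $$ (j+1, j) = M $$ (j+1, j) * P $$ (j, j)" if "j + 1 < n"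
  proof -
    have "j < n" using that by simp
    then show ?thesis
      unfolding index_mult_mat_sum[OF M P that \<open>j < n\<close>] using that M0 P0
      by (intro sum_eq_single_term) (auto simp: nat_neq_iff)
  qed
qed

lemma upper_hessenberg_conj_upper_unitriangular:
  fixes Q X P :: "'a::semiring_1 mat"
  assumes Q: "Q \<in> carrier_mat n n" and X: "X \<in> carrier_mat n n" and P: "P \<in> carrier_mat n n"
    and "upper_triangular Q" "upper_triangular P"
    and "\<And>i. i < n \<Longrightarrow> Q $$ (i,i) = 1" "\<And>i. i < n \<Longrightarrow> P $$ (i,i) = 1"
    and "upper_hessenberg X"
  shows "upper_hessenberg (Q * X * P)"
    and "j + 1 < n \<Longrightarrow> (Q * X * P) $$ (j+1, j) = X $$ (j+1, j)"
proof -
  note left = upper_hessenberg_mult_upper_triangular_left[OF Q X assms(4,8)]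
  have QX: "Q * X \<in> carrier_mat n n" using Q X by simp
  note right = upper_hessenberg_mult_upper_triangular_right[OF QX P assms(5) left(1)]
  show "upper_hessenberg (Q * X * P)" by (rule right(1))
  show "(Q * X * P) $$ (j+1, j) = X $$ (j+1, j)" if "j + 1 < n"
    using right(2)[OF that] left(2)[OF that] assms(6,7) that by simp
qed

lemma irred_tridiagonal_mat_transpose:
  assumes "irred_tridiagonal_mat M"
  shows "irred_tridiagonal_mat (transpose_mat M)"
  using assms unfolding irred_tridiagonal_mat_def tridiagonal_mat_def by fastforce

lemma symmetric_support_if_mat_diag_symmetrizer:
  fixes T :: "'a::field mat"
  assumes T: "T \<in> carrier_mat n n" and g: "\<And>i. i < n \<Longrightarrow> g i \<noteq> 0"
    and sym: "mat_diag n g * T = transpose_mat T * mat_diag n g" and ij: "i < n" "j < n"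
  shows "T $$ (i,j) = 0 \<longleftrightarrow> T $$ (j,i) = 0"
proof -
  have "g i * T $$ (i,j) = T $$ (j,i) * g j"
    using arg_cong[OF sym, of "\<lambda>M. M $$ (i,j)"] T ij
    by (simp add: mat_diag_mult_left mat_diag_mult_right)
  then show ?thesis using g ij by auto
qed

lemma irred_tridiagonal_if_upper_hessenberg_symmetric_support:
  assumes T: "T \<in> carrier_mat n n" and hess: "upper_hessenberg T"
    and sub: "\<And>j. j + 1 < n \<Longrightarrow> T $$ (j+1, j) \<noteq> 0"
    and sym: "\<And>i j. i < n \<Longrightarrow> j < n \<Longrightarrow> T $$ (i,j) = 0 \<longleftrightarrow> T $$ (j,i) = 0"
  shows "irred_tridiagonal_mat T"
  unfolding irred_tridiagonal_mat_def tridiagonal_mat_def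
proof (intro conjI allI impI)
  fix i j assume "i < dim_row T" "j < dim_col T" "T $$ (i,j) \<noteq> 0"
  moreover have "T $$ (i,j) = 0" if "i < n" "j < n" "j + 1 < i \<or> i + 1 < j"
    using that hess sym[of i j] T unfolding upper_hessenberg_def by auto
  ultimately show "i = j \<or> i = j + 1 \<or> j = i + 1" using T by fastforce
next
  fix i assume "i + 1 < dim_row T" "i + 1 < dim_col T"
  then show "T $$ (i+1, i) \<noteq> 0" "T $$ (i, i+1) \<noteq> 0"
    using sub[of i] sym[of "i+1" i] T by auto
qed

lemma irred_tridiagonal_if_symmetrizer_commutes_with_mat_diag:
  fixes T G K :: "'a::field mat"
  assumes T: "T \<in> carrier_mat n n" and G: "G \<in> carrier_mat n n" and K: "K \<in> carrier_mat n n"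
    and GK: "G * K = 1\<^sub>m n" and comm: "G * mat_diag n f = mat_diag n f * G" and inj: "inj_on f {..<n}"
    and sym: "G * T = transpose_mat T * G"
    and hess: "upper_hessenberg T" and sub: "\<And>j. j + 1 < n \<Longrightarrow> T $$ (j+1, j) \<noteq> 0"
  shows "irred_tridiagonal_mat T"
proof -
  define g where "g i = G $$ (i,i)" for i
  have G_diag: "G = mat_diag n g"
    unfolding g_def by (rule diagonal_mat_eq_mat_diag[OF G diagonal_if_commutes_with_mat_diag[OF G inj comm]])
  have "g i \<noteq> 0" if "i < n" for i
    using mat_diag_right_invertible_nonzero[of n g K i] GK K that unfolding G_diag by blast
  then have "T $$ (i,j) = 0 \<longleftrightarrow> T $$ (j,i) = 0" if "i < n" "j < n" for i j
    using symmetric_support_if_mat_diag_symmetrizer[OF T, of g] sym that unfolding G_diag by blast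
  then show ?thesis using irred_tridiagonal_if_upper_hessenberg_symmetric_support[OF T hess sub] by blast
qed

lemma irred_tridiagonal_mat_diag_symmetrizer:
  fixes T :: "'a::field mat"
  assumes T: "T \<in> carrier_mat n n" and irr: "irred_tridiagonal_mat T"
  obtains s where "\<And>i. i < n \<Longrightarrow> s i \<noteq> 0"
    and "transpose_mat T * mat_diag n s = mat_diag n s * T"
proof
  define s where "s i = (\<Prod>k<i. T $$ (k, k+1) / T $$ (k+1, k))" for i
  have off: "T $$ (k+1, k) \<noteq> 0" "T $$ (k, k+1) \<noteq> 0" if "k + 1 < n" for k
    using irr that T unfolding irred_tridiagonal_mat_def by auto
  have far: "T $$ (i,j) = 0" if "i < n" "j < n" "\<not> (i = j \<or> i = j + 1 \<or> j = i + 1)" for i j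
    using irr that T unfolding irred_tridiagonal_mat_def tridiagonal_mat_def by auto
  show "s i \<noteq> 0" if "i < n" for i
    unfolding s_def using off that by (auto simp: prod_zero_iff)
  have s_Suc: "s (Suc k) = s k * (T $$ (k, k+1) / T $$ (k+1, k))" for k
    unfolding s_def by simp
  have "T $$ (j,i) * s j = s i * T $$ (i,j)" if "i < n" "j < n" for i j
  proof -
    consider "i = j" | "i = j + 1" | "j = i + 1" | "\<not> (i = j \<or> i = j + 1 \<or> j = i + 1)" by blast
    then show ?thesis
    proof cases
      case 2 then show ?thesis using s_Suc[of j] off[of j] that by (simp add: field_simps)
    next
      case 3 then show ?thesis using s_Suc[of i] off[of i] that by (simp add: field_simps)
    next
      case 4 then show ?thesis using far that by simp
    qed simp
  qed
  then show "transpose_mat T * mat_diag n s = mat_diag n s * T"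
    using T by (auto intro!: eq_matI simp: mat_diag_mult_left mat_diag_mult_right)
qed

lemma transpose_intertwiner_congruence:
  fixes X H P Q :: "'a::comm_ring_1 mat"
  assumes X: "X \<in> carrier_mat n n" and H: "H \<in> carrier_mat n n"
    and P: "P \<in> carrier_mat n n" and Q: "Q \<in> carrier_mat n n"
    and PQ: "P * Q = 1\<^sub>m n" and XH: "transpose_mat X * H = H * X"
  shows "transpose_mat (Q * X * P) * (transpose_mat P * H * P)
    = (transpose_mat P * H * P) * (Q * X * P)"
proof -
  have QtPt: "transpose_mat Q * transpose_mat P = 1\<^sub>m n" by (rule transpose_mult_eq_one[OF P Q PQ])
  have "transpose_mat (Q * X * P) * (transpose_mat P * H * P)
      = transpose_mat P * (transpose_mat X * (transpose_mat Q * (transpose_mat P * (H * P))))"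
    using X H P Q by (simp add: transpose_mult[of _ n n _ n] assoc_mult_mat[of _ n n _ n _ n])
  also have "\<dots> = transpose_mat P * ((transpose_mat X * H) * P)"
    using X H P Q by (simp add: mult_inverse_cancel_left[OF _ _ QtPt] assoc_mult_mat[of _ n n _ n _ n])
  also have "\<dots> = transpose_mat P * (H * (P * (Q * (X * P))))"
    using X H P Q by (simp add: XH mult_inverse_cancel_left[OF P Q PQ] assoc_mult_mat[of _ n n _ n _ n])
  also have "\<dots> = (transpose_mat P * H * P) * (Q * X * P)"
    using X H P Q by (simp add: assoc_mult_mat[of _ n n _ n _ n])
  finally show ?thesis .
qed

lemma transpose_intertwiner_pullback:
  fixes Z S P Q :: "'a::comm_ring_1 mat"
  assumes Z: "Z \<in> carrier_mat n n" and S: "S \<in> carrier_mat n n"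
    and P: "P \<in> carrier_mat n n" and Q: "Q \<in> carrier_mat n n"
    and PQ: "P * Q = 1\<^sub>m n" and QP: "Q * P = 1\<^sub>m n"
    and ZS: "transpose_mat (Q * Z * P) * S = S * (Q * Z * P)"
  shows "transpose_mat Z * (transpose_mat Q * S * Q) = (transpose_mat Q * S * Q) * Z"
proof -
  have "P * (Q * Z * P) * Q = Z"
    using P Q Z by (simp add: assoc_mult_mat[of _ n n _ n _ n] mult_inverse_cancel_left[OF P Q PQ] PQ)
  then show ?thesis
    using transpose_intertwiner_congruence[of "Q * Z * P" n S Q P] P Q Z S QP ZS by simp
qed

lemma congruence_mult_eq_one:
  fixes P Q S Si :: "'a::comm_semiring_1 mat"
  assumes P: "P \<in> carrier_mat n n" and Q: "Q \<in> carrier_mat n n"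
    and S: "S \<in> carrier_mat n n" and Si: "Si \<in> carrier_mat n n"
    and PQ: "P * Q = 1\<^sub>m n" and QP: "Q * P = 1\<^sub>m n" and SSi: "S * Si = 1\<^sub>m n"
  shows "(transpose_mat Q * S * Q) * (P * Si * transpose_mat P) = 1\<^sub>m n"
  using P Q S Si transpose_mult_eq_one[OF P Q PQ]
  by (simp add: assoc_mult_mat[of _ n n _ n _ n] mult_inverse_cancel_left[OF Q P QP]
      mult_inverse_cancel_left[OF S Si SSi])

lemma conj_transpose_eq_iff:
  fixes X H Hi :: "'a::comm_ring_1 mat"
  assumes X: "X \<in> carrier_mat n n" and H: "H \<in> carrier_mat n n" and Hi: "Hi \<in> carrier_mat n n"
    and HHi: "H * Hi = 1\<^sub>m n" and HiH: "Hi * H = 1\<^sub>m n"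
  shows "Hi * transpose_mat X * H = X \<longleftrightarrow> transpose_mat X * H = H * X"
    and "Hi * transpose_mat X * H = X \<longleftrightarrow> X * Hi = Hi * transpose_mat X"
proof -
  have Xt: "transpose_mat X \<in> carrier_mat n n" using X by simp
  have left: "H * (Hi * Z) = Z" "Hi * (H * Z) = Z" if "dim_row Z = n" for Z :: "'a mat"
    using mult_inverse_cancel_left[OF H Hi HHi that] mult_inverse_cancel_left[OF Hi H HiH that] by auto
  have right: "Z * H * Hi = Z" "Z * Hi * H = Z" if "Z \<in> carrier_mat n n" for Z
    using that H Hi by (simp_all add: assoc_mult_mat[of _ n n _ n _ n] HHi HiH)
  show "Hi * transpose_mat X * H = X \<longleftrightarrow> transpose_mat X * H = H * X"
  proof
    assume "Hi * transpose_mat X * H = X"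
    then have "H * X = H * (Hi * (transpose_mat X * H))"
      using Xt H Hi by (simp add: assoc_mult_mat[of _ n n _ n _ n])
    then show "transpose_mat X * H = H * X" using Xt H by (simp add: left)
  next
    assume "transpose_mat X * H = H * X"
    then show "Hi * transpose_mat X * H = X"
      using X Xt H Hi by (simp add: assoc_mult_mat[of _ n n _ n _ n] left)
  qed
  show "Hi * transpose_mat X * H = X \<longleftrightarrow> X * Hi = Hi * transpose_mat X"
    using X Xt H Hi right[of "Hi * transpose_mat X"] right[of X]
    by (metis mult_carrier_mat)
qed

definition tridiagonal_diagonal_basis :: "nat \<Rightarrow> 'a::field mat \<Rightarrow> 'a mat \<Rightarrow> bool" where
  "tridiagonal_diagonal_basis n X Y \<longleftrightarrow>
    (\<exists>P \<in> carrier_mat n n. \<exists>Q \<in> carrier_mat n n. P * Q = 1\<^sub>m n \<and> Q * P = 1\<^sub>m n \<and>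
        irred_tridiagonal_mat (Q * X * P) \<and> diagonal_mat (Q * Y * P))"

lemma Leonard_pair_iff_bases:
  "Leonard_pair n X Y \<longleftrightarrow> tridiagonal_diagonal_basis n X Y \<and> tridiagonal_diagonal_basis n Y X"
  unfolding Leonard_pair_def tridiagonal_diagonal_basis_def ..

lemma tridiagonal_diagonal_basis_transpose:
  fixes X Y :: "'a::field mat"
  assumes X: "X \<in> carrier_mat n n" and Y: "Y \<in> carrier_mat n n"
    and "tridiagonal_diagonal_basis n (transpose_mat X) (transpose_mat Y)"
  shows "tridiagonal_diagonal_basis n X Y"
proof -
  obtain P Q where P: "P \<in> carrier_mat n n" and Q: "Q \<in> carrier_mat n n"
    and PQ: "P * Q = 1\<^sub>m n" and QP: "Q * P = 1\<^sub>m n"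
    and irr: "irred_tridiagonal_mat (Q * transpose_mat X * P)"
    and dg: "diagonal_mat (Q * transpose_mat Y * P)"
    using assms(3) unfolding tridiagonal_diagonal_basis_def by blast
  have transpose_conj: "transpose_mat (Q * transpose_mat Z * P) = transpose_mat P * Z * transpose_mat Q"
    if "Z \<in> carrier_mat n n" for Z
    using that P Q by (simp add: transpose_mult[of _ n n _ n] assoc_mult_mat[of _ n n _ n _ n])
  have "transpose_mat Q * transpose_mat P = 1\<^sub>m n" "transpose_mat P * transpose_mat Q = 1\<^sub>m n"
    using transpose_mult_eq_one[OF P Q PQ] transpose_mult_eq_one[OF Q P QP] by auto
  moreover have "irred_tridiagonal_mat (transpose_mat P * X * transpose_mat Q)"
    using irred_tridiagonal_mat_transpose[OF irr] by (simp add: transpose_conj[OF X])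
  moreover have "diagonal_mat (transpose_mat P * Y * transpose_mat Q)"
    using diagonal_mat_transpose[OF dg] by (simp add: transpose_conj[OF Y])
  ultimately show ?thesis
    unfolding tridiagonal_diagonal_basis_def using P Q by (meson transpose_carrier_mat)
qed

lemma transpose_similar_if_tridiagonal_diagonal_basis:
  fixes X Y :: "'a::field mat"
  assumes X: "X \<in> carrier_mat n n" and Y: "Y \<in> carrier_mat n n"
    and "tridiagonal_diagonal_basis n X Y"
  shows "\<exists>H \<in> carrier_mat n n. \<exists>Hi \<in> carrier_mat n n. H * Hi = 1\<^sub>m n \<and> Hi * H = 1\<^sub>m n \<and>
    Hi * transpose_mat X * H = X \<and> Hi * transpose_mat Y * H = Y"
proof -
  obtain P Q where P: "P \<in> carrier_mat n n" and Q: "Q \<in> carrier_mat n n"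
    and PQ: "P * Q = 1\<^sub>m n" and QP: "Q * P = 1\<^sub>m n"
    and irr: "irred_tridiagonal_mat (Q * X * P)" and dg: "diagonal_mat (Q * Y * P)"
    using assms(3) unfolding tridiagonal_diagonal_basis_def by blast
  have QXP: "Q * X * P \<in> carrier_mat n n" and QYP: "Q * Y * P \<in> carrier_mat n n"
    using P Q X Y by auto
  obtain s where s: "\<And>i. i < n \<Longrightarrow> s i \<noteq> 0"
    and XS: "transpose_mat (Q * X * P) * mat_diag n s = mat_diag n s * (Q * X * P)"
    using irred_tridiagonal_mat_diag_symmetrizer[OF QXP irr] by blast
  define S where "S = mat_diag n s"
  define Si where "Si = mat_diag n (\<lambda>i. inverse (s i))"
  have S: "S \<in> carrier_mat n n" and Si: "Si \<in> carrier_mat n n" unfolding S_def Si_def by auto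
  have SSi: "S * Si = 1\<^sub>m n" "Si * S = 1\<^sub>m n"
    unfolding S_def Si_def mat_diag_diag using s by (auto intro!: eq_matI simp: mat_diag_def)
  define e where "e i = (Q * Y * P) $$ (i,i)" for i
  have "Q * Y * P = mat_diag n e"
    unfolding e_def by (rule diagonal_mat_eq_mat_diag[OF QYP dg])
  then have YS: "transpose_mat (Q * Y * P) * S = S * (Q * Y * P)"
    unfolding S_def by (simp add: mult.commute)
  define H where "H = transpose_mat Q * S * Q"
  define Hi where "Hi = P * Si * transpose_mat P"
  have H: "H \<in> carrier_mat n n" and Hi: "Hi \<in> carrier_mat n n"
    unfolding H_def Hi_def using P Q S Si by auto
  have HHi: "H * Hi = 1\<^sub>m n"
    unfolding H_def Hi_def by (rule congruence_mult_eq_one[OF P Q S Si PQ QP SSi(1)])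
  have Pt: "transpose_mat P \<in> carrier_mat n n" and Qt: "transpose_mat Q \<in> carrier_mat n n"
    using P Q by auto
  have HiH: "Hi * H = 1\<^sub>m n"
    using congruence_mult_eq_one[OF Qt Pt Si S transpose_mult_eq_one[OF P Q PQ]
        transpose_mult_eq_one[OF Q P QP] SSi(2)]
    by (simp add: H_def Hi_def)
  have "transpose_mat X * H = H * X" "transpose_mat Y * H = H * Y"
    unfolding H_def using transpose_intertwiner_pullback[OF _ S P Q PQ QP] X Y XS YS
    by (simp_all add: S_def)
  then have "Hi * transpose_mat X * H = X" "Hi * transpose_mat Y * H = Y"
    using conj_transpose_eq_iff(1)[OF X H Hi HHi HiH] conj_transpose_eq_iff(1)[OF Y H Hi HHi HiH]
    by simp_all
  then show ?thesis using H Hi HHi HiH by blast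
qed

lemma tridiagonal_diagonal_basis_if_transpose_intertwined:
  fixes X Y H Hi P :: "'a::field mat"
  assumes X: "X \<in> carrier_mat n n" and Y: "Y \<in> carrier_mat n n"
    and H: "H \<in> carrier_mat n n" and Hi: "Hi \<in> carrier_mat n n" and HHi: "H * Hi = 1\<^sub>m n"
    and XH: "transpose_mat X * H = H * X" and YH: "transpose_mat Y * H = H * Y"
    and hess: "upper_hessenberg X" and sub: "\<And>j. j + 1 < n \<Longrightarrow> X $$ (j+1, j) \<noteq> 0"
    and P: "P \<in> carrier_mat n n" and tri: "upper_triangular P"
    and unit: "\<And>i. i < n \<Longrightarrow> P $$ (i,i) = 1"
    and eig: "Y * P = P * mat_diag n f" and inj: "inj_on f {..<n}"
  shows "tridiagonal_diagonal_basis n X Y"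
proof -
  obtain Q where Q: "Q \<in> carrier_mat n n" and PQ: "P * Q = 1\<^sub>m n" and QP: "Q * P = 1\<^sub>m n"
    and triQ: "upper_triangular Q" and unitQ: "\<And>i. i < n \<Longrightarrow> Q $$ (i,i) = 1"
    using upper_unitriangular_inverse[OF P tri unit] by blast
  define G where "G = transpose_mat P * H * P"
  define K where "K = Q * Hi * transpose_mat Q"
  have G: "G \<in> carrier_mat n n" and K: "K \<in> carrier_mat n n"
    unfolding G_def K_def using H Hi P Q by auto
  have D: "Q * Y * P = mat_diag n f"
    using Q Y P by (simp add: assoc_mult_mat[of _ n n _ n _ n] eig mult_inverse_cancel_left[OF Q P QP]
        carrier_matD[OF mat_diag_dim])
  have comm: "G * mat_diag n f = mat_diag n f * G"
    using transpose_intertwiner_congruence[OF Y H P Q PQ YH] by (simp add: D G_def)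
  have GK: "G * K = 1\<^sub>m n"
    unfolding G_def K_def by (rule congruence_mult_eq_one[OF Q P H Hi QP PQ HHi])
  have sym: "G * (Q * X * P) = transpose_mat (Q * X * P) * G"
    using transpose_intertwiner_congruence[OF X H P Q PQ XH] by (simp add: G_def)
  note hess_conj = upper_hessenberg_conj_upper_unitriangular[OF Q X P triQ tri unitQ unit hess]
  have "irred_tridiagonal_mat (Q * X * P)"
    by (rule irred_tridiagonal_if_symmetrizer_commutes_with_mat_diag[OF _ G K GK comm inj sym hess_conj(1)])
      (use Q X P hess_conj(2) sub in auto)
  then show ?thesis
    unfolding tridiagonal_diagonal_basis_def using P Q PQ QP D diagonal_mat_diag by metis
qed

lemma Astar_mat_carrier: "Astar_mat d ths ph \<in> carrier_mat (d+1) (d+1)"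
  by (simp add: Astar_mat_def)

lemma A_mat_carrier: "A_mat d th \<in> carrier_mat (d+1) (d+1)"
  by (simp add: A_mat_def)

lemma A_mat_eq_transpose_Astar_mat: "A_mat d th = transpose_mat (Astar_mat d th (\<lambda>_. 1))"
  by (auto intro!: eq_matI simp: A_mat_def Astar_mat_def)

lemma upper_hessenberg_transpose_Astar_mat:
  "upper_hessenberg (transpose_mat (Astar_mat d ths ph))"
  "j < d \<Longrightarrow> transpose_mat (Astar_mat d ths ph) $$ (j+1, j) = ph (j+1)"
  by (auto simp: upper_hessenberg_def Astar_mat_def)

(* Column j is an eigenvector for ths j: it solves (ths i - ths j) v i + ph (i+1) v (i+1) = 0
   for i < j, starting from v j = 1. *)
definition Astar_eigenvector_mat :: "nat \<Rightarrow> (nat \<Rightarrow> 'a::field) \<Rightarrow> (nat \<Rightarrow> 'a) \<Rightarrow> 'a mat" where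
  "Astar_eigenvector_mat d ths ph = mat (d+1) (d+1)
    (\<lambda>(i,j). if i \<le> j then \<Prod>k\<in>{i..<j}. ph (Suc k) / (ths j - ths k) else 0)"

lemma Astar_eigenvector_mat_carrier: "Astar_eigenvector_mat d ths ph \<in> carrier_mat (d+1) (d+1)"
  by (simp add: Astar_eigenvector_mat_def)

lemma upper_triangular_Astar_eigenvector_mat: "upper_triangular (Astar_eigenvector_mat d ths ph)"
  by (auto simp: Astar_eigenvector_mat_def)

lemma Astar_eigenvector_mat_diag: "i < d + 1 \<Longrightarrow> Astar_eigenvector_mat d ths ph $$ (i,i) = 1"
  by (simp add: Astar_eigenvector_mat_def)

lemma Astar_mat_mult_eigenvector_mat:
  fixes ths ph :: "nat \<Rightarrow> 'a::field"
  assumes inj: "inj_on ths {0..d}"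
  shows "Astar_mat d ths ph * Astar_eigenvector_mat d ths ph
    = Astar_eigenvector_mat d ths ph * mat_diag (d+1) ths"
proof -
  define n where "n = d + 1"
  define E where "E = Astar_eigenvector_mat d ths ph"
  define p where "p i j = (if i \<le> j then \<Prod>k\<in>{i..<j}. ph (Suc k) / (ths j - ths k) else 0)" for i j
  have E_entry: "E $$ (i,j) = p i j" if "i < n" "j < n" for i j
    using that unfolding E_def Astar_eigenvector_mat_def p_def n_def by simp
  have As: "Astar_mat d ths ph \<in> carrier_mat n n" and E: "E \<in> carrier_mat n n"
    unfolding Astar_mat_def E_def Astar_eigenvector_mat_def n_def by auto
  have p_step: "p i j = ph (Suc i) / (ths j - ths i) * p (Suc i) j" if "i < j" for i j
    using that unfolding p_def by (simp add: prod.atLeast_Suc_lessThan)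
  have "(Astar_mat d ths ph * E) $$ (i,j) = p i j * ths j" if i: "i < n" and j: "j < n" for i j
  proof -
    have "(Astar_mat d ths ph * E) $$ (i,j)
        = (\<Sum>k<n. (if k = i then ths i * p i j else 0) + (if k = Suc i then ph (Suc i) * p (Suc i) j else 0))"
      unfolding index_mult_mat_sum[OF As E i j]
      using i j E_entry by (intro sum.cong) (auto simp: Astar_mat_def n_def)
    also have "\<dots> = ths i * p i j + (if Suc i < n then ph (Suc i) * p (Suc i) j else 0)"
      using i by (simp add: sum.distrib)
    also have "\<dots> = p i j * ths j"
    proof (cases "i < j")
      case True
      have "ths j \<noteq> ths i" using inj_onD[OF inj, of j i] True j unfolding n_def by fastforce
      then show ?thesis using p_step[OF True] True j by (simp add: field_simps)
    qed (auto simp: p_def)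
    finally show ?thesis .
  qed
  then show ?thesis
    unfolding E_def[symmetric] using As E E_entry
    by (auto intro!: eq_matI simp: mat_diag_mult_right n_def)
qed

lemma tridiagonal_diagonal_basis_bidiagonal_pair:
  fixes th ph ths ps :: "nat \<Rightarrow> 'a::field"
  assumes ths: "inj_on ths {0..d}" and ph: "\<And>i. 1 \<le> i \<Longrightarrow> i \<le> d \<Longrightarrow> ph i \<noteq> 0"
    and H: "H \<in> carrier_mat (d+1) (d+1)" and Hi: "Hi \<in> carrier_mat (d+1) (d+1)"
    and HHi: "H * Hi = 1\<^sub>m (d+1)"
    and XH: "Astar_mat d th ph * H = H * transpose_mat (Astar_mat d th ph)"
    and YH: "transpose_mat (Astar_mat d ths ps) * H = H * Astar_mat d ths ps"
  shows "tridiagonal_diagonal_basis (d+1) (transpose_mat (Astar_mat d th ph)) (Astar_mat d ths ps)"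
proof (rule tridiagonal_diagonal_basis_if_transpose_intertwined[OF _ Astar_mat_carrier H Hi HHi _ YH
      _ _ Astar_eigenvector_mat_carrier upper_triangular_Astar_eigenvector_mat
      Astar_eigenvector_mat_diag Astar_mat_mult_eigenvector_mat[OF ths]])
  show "transpose_mat (Astar_mat d th ph) \<in> carrier_mat (d+1) (d+1)"
    using Astar_mat_carrier by auto
  show "transpose_mat (transpose_mat (Astar_mat d th ph)) * H = H * transpose_mat (Astar_mat d th ph)"
    using XH by simp
  show "upper_hessenberg (transpose_mat (Astar_mat d th ph))"
    by (rule upper_hessenberg_transpose_Astar_mat(1))
  show "transpose_mat (Astar_mat d th ph) $$ (j+1, j) \<noteq> 0" if "j + 1 < d + 1" for j
    using upper_hessenberg_transpose_Astar_mat(2)[where j=j and d=d and ths=th and ph=ph]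
      ph[of "j+1"] that by simp
  show "inj_on ths {..<d+1}" using ths by (simp add: lessThan_Suc_atMost atLeast0AtMost)
qed

lemma Leonard_pair_if_transpose_similar:
  fixes th ths ph :: "nat \<Rightarrow> 'a::field"
  assumes th: "inj_on th {0..d}" and ths: "inj_on ths {0..d}"
    and ph: "\<And>i. 1 \<le> i \<Longrightarrow> i \<le> d \<Longrightarrow> ph i \<noteq> 0"
    and H: "H \<in> carrier_mat (d+1) (d+1)" and Hi: "Hi \<in> carrier_mat (d+1) (d+1)"
    and HHi: "H * Hi = 1\<^sub>m (d+1)" and HiH: "Hi * H = 1\<^sub>m (d+1)"
    and simA: "Hi * transpose_mat (A_mat d th) * H = A_mat d th"
    and simAs: "Hi * transpose_mat (Astar_mat d ths ph) * H = Astar_mat d ths ph"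
  shows "Leonard_pair (d+1) (A_mat d th) (Astar_mat d ths ph)"
proof -
  define B where "B = Astar_mat d th (\<lambda>_. 1)"
  have A: "A_mat d th = transpose_mat B" unfolding B_def by (rule A_mat_eq_transpose_Astar_mat)
  note conj_iff = conj_transpose_eq_iff[OF _ H Hi HHi HiH]
  have AH: "B * H = H * transpose_mat B" and AHi: "transpose_mat B * Hi = Hi * B"
    using simA conj_iff[OF A_mat_carrier[of d th]] unfolding A by auto
  have AsH: "transpose_mat (Astar_mat d ths ph) * H = H * Astar_mat d ths ph"
    and AsHi: "Astar_mat d ths ph * Hi = Hi * transpose_mat (Astar_mat d ths ph)"
    using simAs conj_iff[OF Astar_mat_carrier] by auto
  have "tridiagonal_diagonal_basis (d+1) (A_mat d th) (Astar_mat d ths ph)"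
    unfolding A B_def
    by (rule tridiagonal_diagonal_basis_bidiagonal_pair[OF ths _ H Hi HHi AH[unfolded B_def] AsH]) simp
  \<comment> \<open>The second basis comes from the transposed pair, with the roles of H and Hi swapped.\<close>
  moreover have "tridiagonal_diagonal_basis (d+1) (Astar_mat d ths ph) (A_mat d th)"
    by (rule tridiagonal_diagonal_basis_transpose[OF Astar_mat_carrier A_mat_carrier])
      (use tridiagonal_diagonal_basis_bidiagonal_pair[OF th ph Hi H HiH AsHi AHi[unfolded B_def]]
        in \<open>simp add: A B_def\<close>)
  ultimately show ?thesis unfolding Leonard_pair_iff_bases ..
qed

theorem theorem6p4:
  fixes d :: nat and th ths ph :: "nat \<Rightarrow> 'a::field"
  assumes "inj_on th {0..d}"
    and "inj_on ths {0..d}"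
    and "\<And>i. 1 \<le> i \<Longrightarrow> i \<le> d \<Longrightarrow> ph i \<noteq> 0"
  shows "Leonard_pair (d+1) (A_mat d th) (Astar_mat d ths ph) \<longleftrightarrow>
    (\<exists>H \<in> carrier_mat (d+1) (d+1). \<exists>Hi \<in> carrier_mat (d+1) (d+1).
        H * Hi = 1\<^sub>m (d+1) \<and> Hi * H = 1\<^sub>m (d+1) \<and>
        Hi * transpose_mat (A_mat d th) * H = A_mat d th \<and>
        Hi * transpose_mat (Astar_mat d ths ph) * H = Astar_mat d ths ph)"
    (is "?Leonard \<longleftrightarrow> ?similar")
proof
  assume ?Leonard
  then show ?similar
    unfolding Leonard_pair_iff_bases
    by (intro transpose_similar_if_tridiagonal_diagonal_basis A_mat_carrier Astar_mat_carrier) auto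
next
  assume ?similar
  then show ?Leonard
    by (elim bexE conjE) (rule Leonard_pair_if_transpose_similar[OF assms])
qed

end
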